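(* Let $X$ and $Y$ be finite sets, let $I = X \cap Y$, and let $p \in [1/2, 1]$. Let $Z = |X \cap Y_{\mathrm{sub}}|$, where $Y_{\mathrm{sub}} \subseteq Y$ is obtained by including each element of $Y$ independently with probability $p$. Let $Z'' = |I \setminus T_1| + \sum_{y \in T_1} c_y$, where $s_1 \sim \mathrm{Bin}(|I|, 2(1-p))$, $T_1$ is chosen uniformly at random among subsets of $I$ of size $s_1$, and the $c_y \sim \mathrm{Ber}(1/2)$, $y\in T_1$, are independent fair coins. Then $Z$ and $Z''$ are identically distributed. Consequently, for any $\epsilon>0$, $\delta \in [0,1)$, the map $Y \mapsto Z$ (with $X$ and $p$ fixed) is $(\epsilon,\delta)$-differentially private with respect to $Y$ if and only if the map $Y \mapsto Z''$ is.
   Context: $\mathrm{Ber}(r)$ denotes a Bernoulli random variable with success probability $r$, and $\mathrm{Bin}(m,r)$ a binomial random variable. A randomized mechanism $\mathcal M$ taking a finite set $Y$ as input is $(\epsilon,\delta)$-differentially private with respect to $Y$ if for all neighboring inputs $Y \sim Y'$ and every set $W$ of outputs, $\Pr[\mathcal M(Y) \in W] \le e^{\epsilon}\Pr[\mathcal M(Y') \in W] + \delta$. Neighbors are in the bounded sense: $Y'$ is obtained from $Y$ by replacing exactly one element with another element (so $|Y|=|Y'|$). *)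

theory Defs
  imports "HOL-Probability.Probability"
begin

definition random_subset :: "'a set \<Rightarrow> real \<Rightarrow> 'a set pmf" where
  "random_subset Y p = map_pmf (\<lambda>f. {y\<in>Y. f y}) (Pi_pmf Y False (\<lambda>_. bernoulli_pmf p))"

definition Z_dist :: "'a set \<Rightarrow> real \<Rightarrow> 'a set \<Rightarrow> nat pmf" where
  "Z_dist X p Y = map_pmf (\<lambda>S. card (X \<inter> S)) (random_subset Y p)"

definition Z''_dist :: "'a set \<Rightarrow> real \<Rightarrow> 'a set \<Rightarrow> nat pmf" where
  "Z''_dist X p Y =
     do { s1 \<leftarrow> binomial_pmf (card (X \<inter> Y)) (2 * (1 - p));
          T1 \<leftarrow> pmf_of_set {T. T \<subseteq> X \<inter> Y \<and> card T = s1};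
          c \<leftarrow> Pi_pmf T1 False (\<lambda>_. bernoulli_pmf (1/2));
          return_pmf (card ((X \<inter> Y) - T1) + card {y\<in>T1. c y}) }"

definition neighbours :: "'a set \<Rightarrow> 'a set \<Rightarrow> bool" where
  "neighbours Y Y' \<longleftrightarrow> (\<exists>a b. a \<in> Y \<and> b \<notin> Y \<and> Y' = insert b (Y - {a}))"

definition diff_private :: "real \<Rightarrow> real \<Rightarrow> ('a set \<Rightarrow> 'b pmf) \<Rightarrow> bool" where
  "diff_private \<epsilon> \<delta> M \<longleftrightarrow>
     (\<forall>Y Y' W. finite Y \<and> finite Y' \<and> neighbours Y Y' \<longrightarrow>
        measure_pmf.prob (M Y) W \<le> exp \<epsilon> * measure_pmf.prob (M Y') W + \<delta>)"

end

theory Submission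
  imports Defs
begin

text \<open>Both Z and Z'' count a p-random subset of I = X \<inter> Y. For Z this is immediate, since
  intersecting a p-random subset of Y with X gives a p-random subset of I. For Z'', drawing a
  binomial size and then a uniform subset of that size is the same as drawing a q-random subset
  T1 of I with q = 2(1 - p); the counted set (I - T1) \<union> {y \<in> T1. c y} then contains each element of
  I independently with probability (1 - q) + q/2 = p. Differential privacy depends only on the
  distributions, so the two mechanisms are private simultaneously.\<close>

lemma set_pmf_random_subset: "finite A \<Longrightarrow> set_pmf (random_subset A q) \<subseteq> Pow A"
  unfolding random_subset_def by auto

lemma pmf_random_subset:
  assumes "finite A" "T \<subseteq> A" "0 \<le> q" "q \<le> 1"
  shows "pmf (random_subset A q) T = q ^ card T * (1 - q) ^ (card A - card T)"
proof -
  have "(\<lambda>f. {y\<in>A. f y}) -` {T} = Pi A (\<lambda>x. {x \<in> T})"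
    using assms(2) by (auto simp: Pi_def)
  then have "pmf (random_subset A q) T = (\<Prod>x\<in>A. pmf (bernoulli_pmf q) (x \<in> T))"
    unfolding random_subset_def using assms(1) by (simp add: pmf_map measure_Pi_pmf_Pi measure_pmf_single)
  also have "\<dots> = (\<Prod>x\<in>T. pmf (bernoulli_pmf q) (x \<in> T)) * (\<Prod>x\<in>A - T. pmf (bernoulli_pmf q) (x \<in> T))"
    using assms(1,2) by (simp add: prod.subset_diff finite_subset)
  also have "\<dots> = q ^ card T * (1 - q) ^ (card A - card T)"
    using assms by (simp add: card_Diff_subset finite_subset)
  finally show ?thesis .
qed

lemma random_subset_conv_binomial:
  assumes "finite A" "0 \<le> q" "q \<le> 1"
  shows "random_subset A q = binomial_pmf (card A) q \<bind> (\<lambda>k. pmf_of_set {T. T \<subseteq> A \<and> card T = k})"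
proof (rule pmf_eqI)
  fix T
  let ?n = "card A" and ?S = "\<lambda>k. {T. T \<subseteq> A \<and> card T = k}"
  define c where "c = (if T \<subseteq> A then 1 / real (?n choose card T) else 0)"
  have uniform: "pmf (pmf_of_set (?S k)) T = c * indicator {card T} k" if k: "k \<le> ?n" for k
  proof -
    obtain B where "B \<subseteq> A" "card B = k" using k by (meson obtain_subset_with_card_n)
    then have "?S k \<noteq> {}" by auto
    then show ?thesis using assms(1) by (auto simp: c_def n_subsets indicator_def)
  qed
  have "pmf (binomial_pmf ?n q \<bind> (\<lambda>k. pmf_of_set (?S k))) T
      = (\<integral>k. c * indicator {card T} k \<partial>binomial_pmf ?n q)"
    unfolding pmf_bind using assms(2,3)
    by (intro integral_cong_AE AE_pmfI) (auto simp: uniform set_pmf_binomial_eq split: if_splits)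
  also have "\<dots> = c * pmf (binomial_pmf ?n q) (card T)"
    by (simp add: measure_pmf_single)
  also have "\<dots> = pmf (random_subset A q) T"
  proof (cases "T \<subseteq> A")
    case True
    then have "card T \<le> ?n" using assms(1) by (simp add: card_mono)
    then show ?thesis using True assms by (simp add: c_def pmf_random_subset)
  next
    case False
    then show ?thesis using set_pmf_random_subset[OF assms(1)]
      by (auto simp: c_def pmf_eq_0_set_pmf)
  qed
  finally show "pmf (random_subset A q) T = pmf (binomial_pmf ?n q \<bind> (\<lambda>k. pmf_of_set (?S k))) T" ..
qed

lemma random_subset_Int:
  assumes "finite B"
  shows "map_pmf ((\<inter>) A) (random_subset B p) = random_subset (A \<inter> B) p"
proof -
  have restrict: "Pi_pmf (A \<inter> B) False (\<lambda>_. bernoulli_pmf p)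
      = map_pmf (\<lambda>f x. if x \<in> A \<inter> B then f x else False) (Pi_pmf B False (\<lambda>_. bernoulli_pmf p))"
    using assms by (intro Pi_pmf_subset) auto
  show ?thesis
    unfolding random_subset_def restrict pmf.map_comp o_def by (intro map_pmf_cong) auto
qed

lemma bernoulli_pmf_bind_imp:
  assumes "0 \<le> q" "q \<le> 1" "0 \<le> r" "r \<le> 1"
  shows "bernoulli_pmf q \<bind> (\<lambda>a. bernoulli_pmf r \<bind> (\<lambda>b. return_pmf (a \<longrightarrow> b)))
       = bernoulli_pmf (1 - q + q * r)"
proof (rule pmf_eqI)
  fix e :: bool
  have "q * r \<le> q" "0 \<le> q * r" using assms by (simp_all add: mult_left_le)
  then have "0 \<le> 1 + q * r - q" "1 + q * r - q \<le> 1" using assms by linarith+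
  then show "pmf (bernoulli_pmf q \<bind> (\<lambda>a. bernoulli_pmf r \<bind> (\<lambda>b. return_pmf (a \<longrightarrow> b)))) e
           = pmf (bernoulli_pmf (1 - q + q * r)) e"
    using assms by (cases e) (simp_all add: pmf_bind indicator_def algebra_simps)
qed

text \<open>Via Pi_pmf_bind, the two coins deciding membership of an element (in T, surviving the
  thinning) merge into the single coin of bernoulli_pmf_bind_imp.\<close>
lemma random_subset_bind_union_complement:
  assumes A: "finite A" and q: "0 \<le> q" "q \<le> 1" and r: "0 \<le> r" "r \<le> 1"
  shows "random_subset A q \<bind> (\<lambda>T. map_pmf (\<lambda>S. (A - T) \<union> S) (random_subset T r))
       = random_subset A (1 - q + q * r)"
proof -
  let ?P = "\<lambda>s. Pi_pmf A False (\<lambda>_. bernoulli_pmf s)"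
  have sub: "random_subset T r = map_pmf ((\<inter>) T) (random_subset A r)" if "T \<subseteq> A" for T
    using random_subset_Int[OF A, of T r] that by (simp add: Int_absorb2)
  have "random_subset A q \<bind> (\<lambda>T. map_pmf (\<lambda>S. (A - T) \<union> S) (random_subset T r))
      = ?P q \<bind> (\<lambda>f. map_pmf (\<lambda>S. (A - {y\<in>A. f y}) \<union> S) (random_subset {y\<in>A. f y} r))"
    unfolding random_subset_def[of A q] by (simp add: bind_map_pmf)
  also have "\<dots> = ?P q \<bind> (\<lambda>f. map_pmf (\<lambda>S. (A - {y\<in>A. f y}) \<union> ({y\<in>A. f y} \<inter> S)) (random_subset A r))"
    by (intro bind_pmf_cong refl) (subst sub, auto simp: pmf.map_comp o_def)
  also have "\<dots> = ?P q \<bind> (\<lambda>f. map_pmf (\<lambda>c. {y\<in>A. f y \<longrightarrow> c y}) (?P r))"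
    unfolding random_subset_def pmf.map_comp o_def by (intro bind_pmf_cong map_pmf_cong refl) auto
  also have "\<dots> = map_pmf (\<lambda>g. {y\<in>A. g y})
      (?P q \<bind> (\<lambda>f. ?P r \<bind> (\<lambda>c. Pi_pmf A False (\<lambda>x. return_pmf (f x \<longrightarrow> c x)))))"
    using A by (auto simp: map_bind_pmf map_pmf_def bind_assoc_pmf bind_return_pmf intro!: bind_pmf_cong)
  also have "\<dots> = map_pmf (\<lambda>g. {y\<in>A. g y})
      (Pi_pmf A False (\<lambda>_. bernoulli_pmf q \<bind> (\<lambda>a. bernoulli_pmf r \<bind> (\<lambda>b. return_pmf (a \<longrightarrow> b)))))"
    using A by (simp add: Pi_pmf_bind[where d'=False])
  also have "\<dots> = random_subset A (1 - q + q * r)"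
    unfolding random_subset_def bernoulli_pmf_bind_imp[OF q r] ..
  finally show ?thesis .
qed

lemma Z''_dist_eq_card_random_subset:
  assumes "finite X" "1/2 \<le> p" "p \<le> 1"
  shows "Z''_dist X p Y = map_pmf card (random_subset (X \<inter> Y) p)"
proof -
  let ?I = "X \<inter> Y"
  define q where "q = 2 * (1 - p)"
  have I: "finite ?I" using assms(1) by simp
  have q: "0 \<le> q" "q \<le> 1" using assms(2,3) by (simp_all add: q_def)
  have coins: "Pi_pmf T False (\<lambda>_. bernoulli_pmf (1/2)) \<bind>
                 (\<lambda>c. return_pmf (card (?I - T) + card {y\<in>T. c y}))
             = map_pmf card (map_pmf (\<lambda>S. (?I - T) \<union> S) (random_subset T (1/2)))"
    if T: "T \<subseteq> ?I" for T
  proof -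
    have "finite T" using finite_subset[OF T I] .
    then have "card (?I - T) + card {y\<in>T. c y} = card ((?I - T) \<union> {y\<in>T. c y})" for c
      using I by (subst card_Un_disjoint) (auto intro: finite_subset)
    then show ?thesis unfolding random_subset_def pmf.map_comp o_def by (simp add: map_pmf_def)
  qed
  have "Z''_dist X p Y = random_subset ?I q \<bind> (\<lambda>T. Pi_pmf T False (\<lambda>_. bernoulli_pmf (1/2)) \<bind>
                 (\<lambda>c. return_pmf (card (?I - T) + card {y\<in>T. c y})))"
    unfolding Z''_dist_def q_def[symmetric] random_subset_conv_binomial[OF I q]
    by (simp add: bind_assoc_pmf)
  also have "\<dots> = map_pmf card
      (random_subset ?I q \<bind> (\<lambda>T. map_pmf (\<lambda>S. (?I - T) \<union> S) (random_subset T (1/2))))"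
    unfolding map_bind_pmf using set_pmf_random_subset[OF I] by (intro bind_pmf_cong refl coins) blast
  also have "\<dots> = map_pmf card (random_subset ?I (1 - q + q * (1/2)))"
    using q by (simp add: random_subset_bind_union_complement[OF I])
  also have "1 - q + q * (1/2) = p"
    by (simp add: q_def field_simps)
  finally show ?thesis .
qed

theorem theorem1:
  fixes X Y :: "'a set" and p :: real
  assumes "finite X" and "finite Y" and "1/2 \<le> p" and "p \<le> 1"
  shows "Z_dist X p Y = Z''_dist X p Y
     \<and> (\<forall>\<epsilon> \<delta>. \<epsilon> > 0 \<and> 0 \<le> \<delta> \<and> \<delta> < 1 \<longrightarrow>
          (diff_private \<epsilon> \<delta> (Z_dist X p) \<longleftrightarrow> diff_private \<epsilon> \<delta> (Z''_dist X p)))"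
proof -
  have same_dist: "Z_dist X p Y' = Z''_dist X p Y'" if "finite Y'" for Y'
  proof -
    have "Z_dist X p Y' = map_pmf card (map_pmf ((\<inter>) X) (random_subset Y' p))"
      unfolding Z_dist_def pmf.map_comp o_def ..
    then show ?thesis
      by (simp add: random_subset_Int[OF that] Z''_dist_eq_card_random_subset[OF assms(1,3,4)])
  qed
  then have "diff_private \<epsilon> \<delta> (Z_dist X p) \<longleftrightarrow> diff_private \<epsilon> \<delta> (Z''_dist X p)" for \<epsilon> \<delta>
    unfolding diff_private_def by auto
  then show ?thesis
    using same_dist[OF assms(2)] by blast
qed

end
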